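(* Let $n\ge2$, let $\mathcal{G}$ be one of $F_n$, $T_n$, $V_n$, and let $g\in\mathcal{G}$ be represented by the tree pair $(\mathrm{G}_{+},\sigma,\mathrm{G}_{-})$. Let $\ell_u(\mathrm{G}_{+})\mapsto\ell_v(\mathrm{G}_{-})$ be a branch of $g$, let $h\in F_n$ and let $h'=(h)_{[v]}$. Then $\mathcal{N}(gh')=\mathcal{N}(g)+\mathcal{N}(h)-1$.
   Context: $F_n,T_n,V_n$ are the Brown–Thompson groups of piecewise-linear maps of $[0,1]$ (resp. the circle, resp. right-continuous bijections of $[0,1]$) with finitely many $n$-adic breakpoints and slopes powers of $n$; elements are represented by pairs $(\mathrm{T}_+,\sigma,\mathrm{T}_-)$ of rooted finite $n$-ary trees with the same number of leaves and a bijection $\sigma$ between their leaves, and each element has a unique reduced such representative. $\mathcal{N}(g)$ is the number of leaves of each tree in the reduced tree pair of $g$. Nodes of the infinite rooted $n$-ary tree are identified with words over $\{0,\dots,n-1\}$ (the path from the root); a leaf of a finite tree corresponds to such a word, and the path from the root to leaf $\omega$ is denoted $\ell_\omega(\mathrm{T})$. A branch of $g$ is a correspondence $\ell_{\omega}(\mathrm{T}_+)\mapsto\ell_{\sigma(\omega)}(\mathrm{T}_-)$ between a leaf of the source tree and the leaf of the target tree it is mapped to. For $h\in F_n$ with tree pair $(\mathrm{H}_+,\mathrm{id},\mathrm{H}_-)$ and a word $v$, $(h)_{[v]}$ denotes the element whose tree pair is obtained from a tree pair $(\mathrm{T},\mathrm{id},\mathrm{T})$ having $v$ as a leaf by attaching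 $\mathrm{H}_+$ to the leaf $v$ of the source tree and $\mathrm{H}_-$ to the leaf $v$ of the target tree (so it acts as $h$ on the subinterval corresponding to $v$ and as the identity elsewhere). *)

theory Defs
  imports Complex_Main
begin

text \<open>Words over {0..n-1} are nat lists. The n-adic interval of a word w is
  [wleft n w, wleft n w + wlen n w).\<close>

definition wleft :: "nat \<Rightarrow> nat list \<Rightarrow> real" where
  "wleft n w = (\<Sum>i<length w. real (w ! i) / real n ^ (i + 1))"

definition wlen :: "nat \<Rightarrow> nat list \<Rightarrow> real" where
  "wlen n w = 1 / real n ^ length w"

definition in_word :: "nat \<Rightarrow> nat list \<Rightarrow> real \<Rightarrow> bool" where
  "in_word n w x \<longleftrightarrow> wleft n w \<le> x \<and> x < wleft n w + wlen n w"

text \<open>Finite rooted n-ary trees, represented by their sets of leaves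
  (each leaf identified with the word of its path from the root).\<close>

inductive_set ntree :: "nat \<Rightarrow> nat list set set" for n :: nat where
  root: "{[]} \<in> ntree n"
| expand: "L \<in> ntree n \<Longrightarrow> w \<in> L \<Longrightarrow> (L - {w}) \<union> {w @ [i] | i. i < n} \<in> ntree n"

text \<open>A tree pair (T+, sigma, T-): leaves of source tree, bijection of leaves, leaves of target tree.\<close>

type_synonym tpair = "nat list set \<times> (nat list \<Rightarrow> nat list) \<times> nat list set"

definition tree_pair :: "nat \<Rightarrow> tpair \<Rightarrow> bool" where
  "tree_pair n P = (case P of (Tp, \<sigma>, Tm) \<Rightarrow>
     Tp \<in> ntree n \<and> Tm \<in> ntree n \<and> bij_betw \<sigma> Tp Tm)"

definition F_pair :: "nat \<Rightarrow> tpair \<Rightarrow> bool" where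
  "F_pair n P = (tree_pair n P \<and> (case P of (Tp, \<sigma>, Tm) \<Rightarrow>
     (\<forall>a\<in>Tp. \<forall>b\<in>Tp. wleft n a < wleft n b \<longrightarrow> wleft n (\<sigma> a) < wleft n (\<sigma> b))))"

definition cyc_ord :: "real \<Rightarrow> real \<Rightarrow> real \<Rightarrow> bool" where
  "cyc_ord x y z \<longleftrightarrow> (x < y \<and> y < z) \<or> (y < z \<and> z < x) \<or> (z < x \<and> x < y)"

definition T_pair :: "nat \<Rightarrow> tpair \<Rightarrow> bool" where
  "T_pair n P = (tree_pair n P \<and> (case P of (Tp, \<sigma>, Tm) \<Rightarrow>
     (\<forall>a\<in>Tp. \<forall>b\<in>Tp. \<forall>c\<in>Tp. cyc_ord (wleft n a) (wleft n b) (wleft n c)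
        \<longrightarrow> cyc_ord (wleft n (\<sigma> a)) (wleft n (\<sigma> b)) (wleft n (\<sigma> c)))))"

text \<open>The map of [0,1] determined by a tree pair: the interval of leaf w is mapped
  affinely onto the interval of sigma w; points outside [0,1) are fixed.\<close>

definition tp_map :: "nat \<Rightarrow> tpair \<Rightarrow> real \<Rightarrow> real" where
  "tp_map n P x = (case P of (Tp, \<sigma>, Tm) \<Rightarrow>
     (if (\<exists>w\<in>Tp. in_word n w x)
      then (let w = (THE w. w \<in> Tp \<and> in_word n w x)
            in wleft n (\<sigma> w) + (x - wleft n w) * (wlen n (\<sigma> w) / wlen n w))
      else x))"

definition Fn :: "nat \<Rightarrow> (real \<Rightarrow> real) set" where
  "Fn n = {tp_map n P | P. F_pair n P}"

definition Tn :: "nat \<Rightarrow> (real \<Rightarrow> real) set" where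
  "Tn n = {tp_map n P | P. T_pair n P}"

definition Vn :: "nat \<Rightarrow> (real \<Rightarrow> real) set" where
  "Vn n = {tp_map n P | P. tree_pair n P}"

definition represents :: "nat \<Rightarrow> tpair \<Rightarrow> (real \<Rightarrow> real) \<Rightarrow> bool" where
  "represents n P g \<longleftrightarrow> tree_pair n P \<and> tp_map n P = g"

definition reduced :: "nat \<Rightarrow> tpair \<Rightarrow> bool" where
  "reduced n P = (case P of (Tp, \<sigma>, Tm) \<Rightarrow>
     \<not> (\<exists>w w'. \<forall>i<n. w @ [i] \<in> Tp \<and> \<sigma> (w @ [i]) = w' @ [i]))"

text \<open>N(g): number of leaves of the (unique) reduced tree pair of g.\<close>

definition nleaves :: "nat \<Rightarrow> (real \<Rightarrow> real) \<Rightarrow> nat" where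
  "nleaves n g = (THE k. \<exists>P. represents n P g \<and> reduced n P \<and> card (fst P) = k)"

text \<open>(h)_[v]: from (T, id, T) with v a leaf, attach H+ at v in the source and H- at v in the target.\<close>

definition attach :: "nat list set \<Rightarrow> nat list \<Rightarrow> tpair \<Rightarrow> tpair" where
  "attach T v H = (case H of (Hp, \<tau>, Hm) \<Rightarrow>
     ((T - {v}) \<union> (\<lambda>w. v @ w) ` Hp,
      (\<lambda>x. if x \<in> (\<lambda>w. v @ w) ` Hp then v @ \<tau> (drop (length v) x) else x),
      (T - {v}) \<union> (\<lambda>w. v @ w) ` Hm))"

end

theory Submission
  imports Defs "HOL-Library.Sublist"
begin

(* Let (A+, rho, A-) be the reduced tree pair of h. Replacing the leaf u of G+ by a copy of A+
   and the leaf v = sigma u of G- by a copy of A- yields a tree pair for the composite of g with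
   (h)_[v], with N(g) - 1 + N(h) leaves. This pair is again reduced: a caret mapped onto a caret
   lies either inside the copy of A+, contradicting the reducedness of (A+, rho, A-), or among the
   old leaves of G+, contradicting the reducedness of g. Finally, the leaves of a reduced pair are
   determined by the map alone -- they are the maximal words on whose interval the map is affine
   onto the interval of a word -- so N can be read off from any reduced pair. *)

section \<open>Word intervals\<close>

lemma wleft_Nil [simp]: "wleft n [] = 0"
  by (simp add: wleft_def)

lemma wlen_Nil [simp]: "wlen n [] = 1"
  by (simp add: wlen_def)

lemma wlen_pos: "n > 0 \<Longrightarrow> wlen n a > 0"
  by (simp add: wlen_def)

lemma wleft_Cons:
  assumes "n > 0"
  shows "wleft n (i # b) = (real i + wleft n b) / real n"
proof -
  have "wleft n (i # b) = real i / real n + (\<Sum>k<length b. real (b ! k) / real n ^ (k + 2))"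
    unfolding wleft_def by (simp add: sum.lessThan_Suc_shift del: sum.lessThan_Suc)
  also have "(\<Sum>k<length b. real (b ! k) / real n ^ (k + 2)) = wleft n b / real n"
    unfolding wleft_def sum_divide_distrib by (intro sum.cong) (auto simp: field_simps)
  finally show ?thesis by (simp add: add_divide_distrib)
qed

lemma wlen_append: "wlen n (a @ b) = wlen n a * wlen n b"
  by (simp add: wlen_def power_add)

lemma wleft_append:
  assumes "n > 0"
  shows "wleft n (a @ b) = wleft n a + wleft n b * wlen n a"
  using assms by (induction a) (auto simp: wleft_Cons wlen_def field_simps)

lemma wlen_eq_imp_length_eq:
  assumes "n \<ge> 2" "wlen n a = wlen n b"
  shows "length a = length b"
  using assms by (simp add: wlen_def power_inject_exp)

definition word_coord :: "nat \<Rightarrow> nat list \<Rightarrow> real \<Rightarrow> real" where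
  "word_coord n a x = (x - wleft n a) / wlen n a"

definition word_point :: "nat \<Rightarrow> nat list \<Rightarrow> real \<Rightarrow> real" where
  "word_point n a y = wleft n a + y * wlen n a"

lemma word_coord_point [simp]: "n > 0 \<Longrightarrow> word_coord n a (word_point n a y) = y"
  using wlen_pos[of n a] by (simp add: word_coord_def word_point_def)

lemma word_point_coord [simp]: "n > 0 \<Longrightarrow> word_point n a (word_coord n a x) = x"
  using wlen_pos[of n a] by (simp add: word_coord_def word_point_def)

lemma word_coord_append:
  "n > 0 \<Longrightarrow> word_coord n (a @ b) x = word_coord n b (word_coord n a x)"
  using wlen_pos[of n a] wlen_pos[of n b]
  by (simp add: word_coord_def wleft_append wlen_append field_simps)

lemma word_point_append:
  "n > 0 \<Longrightarrow> word_point n (a @ b) y = word_point n a (word_point n b y)"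
  by (simp add: word_point_def wleft_append wlen_append field_simps)

lemma in_word_iff_word_coord:
  "n > 0 \<Longrightarrow> in_word n a x \<longleftrightarrow> 0 \<le> word_coord n a x \<and> word_coord n a x < 1"
  using wlen_pos[of n a] by (auto simp: in_word_def word_coord_def field_simps)

lemma in_word_Nil: "in_word n [] x \<longleftrightarrow> 0 \<le> x \<and> x < 1"
  by (simp add: in_word_def)

lemma in_word_append:
  "n > 0 \<Longrightarrow> in_word n (a @ b) x \<longleftrightarrow> in_word n b (word_coord n a x)"
  by (simp add: in_word_iff_word_coord word_coord_append)

lemma in_word_Cons:
  assumes "n > 0"
  shows "in_word n (i # a) x \<longleftrightarrow> in_word n a (real n * x - real i)"
proof -
  have "word_coord n [i] x = real n * x - real i"
    using assms by (simp add: word_coord_def wleft_def wlen_def field_simps)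
  then show ?thesis using in_word_append[OF assms, of "[i]" a x] by simp
qed

lemma in_word_word_point: "n > 0 \<Longrightarrow> 0 \<le> y \<Longrightarrow> y < 1 \<Longrightarrow> in_word n a (word_point n a y)"
  by (simp add: in_word_iff_word_coord)

lemma in_word_unit_interval:
  assumes "n > 0" "set a \<subseteq> {..<n}" "in_word n a x"
  shows "0 \<le> x \<and> x < 1"
  using assms(2,3)
proof (induction a arbitrary: x)
  case Nil
  then show ?case by (simp add: in_word_Nil)
next
  case (Cons i a)
  then have "0 \<le> real n * x - real i" "real n * x - real i < 1" "real i + 1 \<le> real n"
    using in_word_Cons[OF assms(1)] by force+
  then have "0 \<le> real n * x" "real n * x < real n * 1" by linarith+
  then show ?case using assms(1) by (simp add: zero_le_mult_iff mult_less_cancel_left)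
qed

lemma in_word_appendD:
  assumes "n > 0" "set b \<subseteq> {..<n}" "in_word n (a @ b) x"
  shows "in_word n a x"
  using in_word_unit_interval[OF assms(1,2)] assms(3)
  by (simp add: in_word_append[OF assms(1)] in_word_iff_word_coord[OF assms(1), of a])

lemma in_word_child:
  assumes "n > 0" "in_word n w x"
  shows "\<exists>i<n. in_word n (w @ [i]) x"
proof -
  define y where "y = word_coord n w x"
  have y: "0 \<le> y" "y < 1" using assms by (simp_all add: y_def in_word_iff_word_coord)
  define i where "i = nat \<lfloor>real n * y\<rfloor>"
  have i: "real i \<le> real n * y" "real n * y < real i + 1"
    using y assms(1) unfolding i_def by (simp_all add: of_nat_nat)
  moreover have "real n * y < real n" using y assms(1) by simp
  ultimately have "i < n" by linarith
  moreover have "in_word n [i] y" using i in_word_Cons[OF assms(1)] by (simp add: in_word_Nil)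
  ultimately show ?thesis using assms(1) by (auto simp: in_word_append y_def)
qed

lemma in_word_prefix_comparable:
  assumes "n > 0" "set a \<subseteq> {..<n}" "set b \<subseteq> {..<n}" "in_word n a x" "in_word n b x"
  shows "prefix a b \<or> prefix b a"
  using assms(2-5)
proof (induction a arbitrary: b x)
  case (Cons i a)
  show ?case
  proof (cases b)
    case (Cons j b')
    have ia: "in_word n a (real n * x - real i)" and jb: "in_word n b' (real n * x - real j)"
      using Cons.prems(3,4) \<open>b = j # b'\<close> in_word_Cons[OF assms(1)] by auto
    have "i = j"
      using in_word_unit_interval[OF assms(1) _ ia] in_word_unit_interval[OF assms(1) _ jb]
        Cons.prems(1,2) \<open>b = j # b'\<close> by auto
    then show ?thesis using Cons.IH[of b'] Cons.prems ia jb \<open>b = j # b'\<close> by auto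
  qed simp
qed simp

lemma in_word_same_length_eq:
  assumes "n > 0" "set a \<subseteq> {..<n}" "set b \<subseteq> {..<n}" "in_word n a x" "in_word n b x"
    "length a = length b"
  shows "a = b"
  using in_word_prefix_comparable[OF assms(1-5)] assms(6) by (auto simp: prefix_def)

section \<open>Finite n-ary trees\<close>

definition caret :: "nat \<Rightarrow> nat list \<Rightarrow> nat list set" where
  "caret n w = {w @ [i] | i. i < n}"

lemma caret_eq_image: "caret n w = (\<lambda>i. w @ [i]) ` {..<n}"
  by (auto simp: caret_def)

lemma card_caret [simp]: "card (caret n w) = n"
  by (simp add: caret_eq_image card_image inj_on_def)

lemma ntree_expand_caret: "L \<in> ntree n \<Longrightarrow> w \<in> L \<Longrightarrow> (L - {w}) \<union> caret n w \<in> ntree n"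
  unfolding caret_def by (rule ntree.expand)

lemma ntree_digits: "L \<in> ntree n \<Longrightarrow> w \<in> L \<Longrightarrow> set w \<subseteq> {..<n}"
  by (induction L arbitrary: w rule: ntree.induct) fastforce+

lemma ntree_finite: "L \<in> ntree n \<Longrightarrow> finite L"
  by (induction L rule: ntree.induct) (simp_all add: caret_eq_image[unfolded caret_def])

lemma ntree_prefix_free: "L \<in> ntree n \<Longrightarrow> a \<in> L \<Longrightarrow> b \<in> L \<Longrightarrow> prefix a b \<Longrightarrow> a = b"
proof (induction L arbitrary: a b rule: ntree.induct)
  case (expand L w)
  have no_child: "w @ [i] \<notin> L" for i
    using expand.IH[of w "w @ [i]"] expand.hyps(2) by auto
  have above_child: "a = w" if "a \<in> L" "prefix a (w @ [i])" for a i
    using that expand.IH[of a w] expand.hyps(2) no_child by (auto simp: prefix_snoc)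
  consider "a \<in> L - {w}" "b \<in> L - {w}" | i where "a \<in> L - {w}" "b = w @ [i]"
    | i where "a = w @ [i]" "b \<in> L - {w}" | i j where "a = w @ [i]" "b = w @ [j]"
    using expand.prems(1,2) by auto
  then show ?case
  proof cases
    case 1
    then show ?thesis using expand.prems(3) expand.IH by blast
  next
    case 2
    then show ?thesis using expand.prems(3) above_child by blast
  next
    case 3
    then show ?thesis using expand.prems(3) expand.IH[of w b] expand.hyps(2) by (auto dest: append_prefixD)
  next
    case 4
    then show ?thesis using expand.prems(3) by (auto simp: prefix_def)
  qed
qed simp

lemma ntree_cover:
  assumes "L \<in> ntree n" "n > 0" "0 \<le> x" "x < 1"
  shows "\<exists>w\<in>L. in_word n w x"
  using assms(1)
proof (induction L rule: ntree.induct)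
  case root
  then show ?case using assms(3,4) by (simp add: in_word_Nil)
next
  case (expand L w)
  then obtain a where a: "a \<in> L" "in_word n a x" by blast
  show ?case
  proof (cases "a = w")
    case True
    then show ?thesis using in_word_child[OF assms(2) a(2)] by auto
  qed (use a in blast)
qed

lemma ntree_in_word_unique:
  assumes "L \<in> ntree n" "n > 0" "a \<in> L" "b \<in> L" "in_word n a x" "in_word n b x"
  shows "a = b"
  using in_word_prefix_comparable[OF assms(2) ntree_digits[OF assms(1,3)] ntree_digits[OF assms(1,4)] assms(5,6)]
    ntree_prefix_free[OF assms(1,3,4)] ntree_prefix_free[OF assms(1,4,3)] by auto

lemma ntree_prefix_comparable:
  assumes "L \<in> ntree n" "n > 0" "set p \<subseteq> {..<n}"
  shows "\<exists>b\<in>L. prefix b p \<or> prefix p b"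
proof -
  have p: "in_word n p (word_point n p 0)" using in_word_word_point[OF assms(2)] by simp
  then obtain b where "b \<in> L" "in_word n b (word_point n p 0)"
    using ntree_cover[OF assms(1,2)] in_word_unit_interval[OF assms(2,3)] by blast
  then show ?thesis using in_word_prefix_comparable[OF assms(2) ntree_digits[OF assms(1)] assms(3)] p by blast
qed

lemma ntree_Nil: "L \<in> ntree n \<Longrightarrow> [] \<in> L \<Longrightarrow> L = {[]}"
  using ntree_prefix_free[of L n "[]"] by auto

lemma ntree_singleton:
  assumes "L \<in> ntree n" "n \<ge> 2" "L = {q}"
  shows "q = []"
proof (rule ccontr)
  assume "q \<noteq> []"
  then obtain i q' where q: "q = i # q'" by (cases q) auto
  define j where "j = (if i = 0 then 1 else (0::nat))"
  have "j < n" "j \<noteq> i" using assms(2) by (auto simp: j_def)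
  then obtain b where "b \<in> L" "prefix b [j] \<or> prefix [j] b"
    using ntree_prefix_comparable[OF assms(1), of "[j]"] assms(2) by auto
  then show False using assms(3) q \<open>j \<noteq> i\<close> by (auto simp: prefix_def Cons_eq_append_conv)
qed

lemma ntree_contract:
  assumes "L \<in> ntree n" "n > 0" "caret n w \<subseteq> L"
  shows "(L - caret n w) \<union> {w} \<in> ntree n"
  using assms(1,3)
proof (induction L arbitrary: w rule: ntree.induct)
  case root
  then show ?case using assms(2) by (auto simp: caret_def)
next
  case (expand L w0)
  show ?case
  proof (cases "w = w0")
    case True
    have "caret n w0 \<inter> L = {}"
      using ntree_prefix_free[OF expand.hyps(1,2)] by (force simp: caret_def)
    then have "(L - {w0} \<union> caret n w0 - caret n w) \<union> {w} = L"
      using True expand.hyps(2) by auto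
    then show ?thesis using expand.hyps(1) by (simp add: caret_def)
  next
    case False
    then have disj: "caret n w \<inter> caret n w0 = {}" by (auto simp: caret_def)
    then have "caret n w \<subseteq> L - {w0}" using expand.prems by (auto simp: caret_def)
    then have "(L - caret n w) \<union> {w} \<in> ntree n" and "w0 \<in> (L - caret n w) \<union> {w}"
      using expand.IH expand.hyps(2) by auto
    then have "((L - caret n w) \<union> {w} - {w0}) \<union> caret n w0 \<in> ntree n"
      by (rule ntree_expand_caret)
    moreover have "((L - caret n w) \<union> {w} - {w0}) \<union> caret n w0
       = (L - {w0} \<union> caret n w0 - caret n w) \<union> {w}"
      using False disj \<open>caret n w \<subseteq> L - {w0}\<close> by auto
    ultimately show ?thesis by (simp add: caret_def)
  qed
qed

lemma ntree_caret_parent_notin: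
  assumes "L \<in> ntree n" "n > 0" "caret n w \<subseteq> L"
  shows "w \<notin> L"
proof -
  have "w @ [0] \<in> L" using assms(2,3) by (auto simp: caret_def)
  then show ?thesis using ntree_prefix_free[OF assms(1), of w "w @ [0]"] by auto
qed

lemma card_ntree_contract:
  assumes "L \<in> ntree n" "n \<ge> 2" "caret n w \<subseteq> L"
  shows "card ((L - caret n w) \<union> {w}) < card L"
proof -
  have "w \<notin> L" using ntree_caret_parent_notin assms by simp
  moreover have "finite L" using ntree_finite[OF assms(1)] .
  ultimately have "card ((L - caret n w) \<union> {w}) = card L - n + 1"
    using assms(3) card_Diff_subset[OF finite_subset[OF assms(3)] assms(3)] by simp
  moreover have "card L \<ge> n" using card_mono[OF \<open>finite L\<close> assms(3)] by simp
  ultimately show ?thesis using assms(2) by linarith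
qed

lemma ntree_caret_below:
  assumes "L \<in> ntree n" "b \<in> L" "strict_prefix p b"
  shows "\<exists>c. caret n (p @ c) \<subseteq> L"
  using assms
proof (induction L arbitrary: b rule: ntree.induct)
  case (expand L w)
  show ?case
  proof (cases "b \<in> caret n w")
    case True
    then obtain i where "b = w @ [i]" by (auto simp: caret_def)
    then have "prefix p w" using expand.prems(2) by (auto simp: strict_prefix_def)
    then obtain c where "w = p @ c" by (auto simp: prefix_def)
    then show ?thesis by (intro exI[of _ c]) (auto simp: caret_def)
  next
    case False
    then have "b \<in> L" using expand.prems(1) by (auto simp: caret_def)
    then obtain c where c: "caret n (p @ c) \<subseteq> L"
      using expand.IH expand.prems(2) by blast
    show ?thesis
    proof (cases "w \<in> caret n (p @ c)")
      case True
      then obtain i where "w = p @ (c @ [i])" by (auto simp: caret_def)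
      then show ?thesis by (intro exI[of _ "c @ [i]"]) (auto simp: caret_def)
    next
      case False
      then show ?thesis using c by (intro exI[of _ c]) (auto simp: caret_def)
    qed
  qed
qed simp

definition graft :: "nat list set \<Rightarrow> nat list \<Rightarrow> nat list set \<Rightarrow> nat list set" where
  "graft L u H = (L - {u}) \<union> (\<lambda>w. u @ w) ` H"

lemma graft_disjoint:
  assumes "L \<in> ntree n" "u \<in> L"
  shows "(L - {u}) \<inter> (\<lambda>w. u @ w) ` H = {}"
  using ntree_prefix_free[OF assms] by (auto simp: prefix_def)

lemma ntree_graft:
  assumes "L \<in> ntree n" "u \<in> L" "H \<in> ntree n"
  shows "graft L u H \<in> ntree n"
  using assms(3)
proof (induction H rule: ntree.induct)
  case root
  then show ?case using assms by (simp add: graft_def insert_absorb)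
next
  case (expand H w)
  have "u @ w \<in> graft L u H" using expand.hyps by (auto simp: graft_def)
  with expand.IH have "(graft L u H - {u @ w}) \<union> caret n (u @ w) \<in> ntree n"
    by (rule ntree_expand_caret)
  moreover have "(graft L u H - {u @ w}) \<union> caret n (u @ w) = graft L u (H - {w} \<union> {w @ [i] |i. i < n})"
    using graft_disjoint[OF assms(1,2), of H] ntree_prefix_free[OF assms(1,2), of "u @ w"]
    by (auto simp: graft_def caret_def)
  ultimately show ?case by simp
qed

lemma card_graft:
  assumes "L \<in> ntree n" "u \<in> L" "H \<in> ntree n"
  shows "card (graft L u H) = card L + card H - 1"
proof -
  have fin: "finite L" "finite H" using ntree_finite assms by blast+
  then have "card (graft L u H) = card (L - {u}) + card H"
    unfolding graft_def using graft_disjoint[OF assms(1,2)]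
    by (simp add: card_Un_disjoint card_image inj_on_def)
  moreover have "card L \<ge> 1" using fin assms(2) by (metis One_nat_def Suc_leI card_gt_0_iff empty_iff)
  ultimately show ?thesis using assms(2) fin by simp
qed

section \<open>The map of a tree pair\<close>

definition interval_map :: "nat \<Rightarrow> nat list \<Rightarrow> nat list \<Rightarrow> real \<Rightarrow> real" where
  "interval_map n a b x = word_point n b (word_coord n a x)"

lemma interval_map_self [simp]: "n > 0 \<Longrightarrow> interval_map n a a x = x"
  by (simp add: interval_map_def)

lemma interval_map_append:
  "n > 0 \<Longrightarrow> interval_map n (u @ w) (v @ w') x = word_point n v (interval_map n w w' (word_coord n u x))"
  by (simp add: interval_map_def word_coord_append word_point_append)

lemma word_coord_interval_map [simp]:
  "n > 0 \<Longrightarrow> word_coord n b (interval_map n a b x) = word_coord n a x"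
  by (simp add: interval_map_def)

lemma in_word_interval_map: "n > 0 \<Longrightarrow> in_word n a x \<Longrightarrow> in_word n b (interval_map n a b x)"
  by (simp add: in_word_iff_word_coord)

lemma interval_map_inject:
  assumes "n \<ge> 2" "set b \<subseteq> {..<n}" "set b' \<subseteq> {..<n}"
    and eq: "\<forall>x. in_word n a x \<longrightarrow> interval_map n a b x = interval_map n a b' x"
  shows "b = b'"
proof -
  have n: "n > 0" using assms(1) by simp
  have point_eq: "word_point n b y = word_point n b' y" if "0 \<le> y" "y < 1" for y
    using eq[rule_format, OF in_word_word_point[OF n that]] n by (simp add: interval_map_def)
  have left: "wleft n b = wleft n b'" using point_eq[of 0] by (simp add: word_point_def)
  then have "wlen n b = wlen n b'" using point_eq[of "1/2"] by (simp add: word_point_def)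
  then have "length b = length b'" by (rule wlen_eq_imp_length_eq[OF assms(1)])
  moreover have "in_word n c (wleft n c)" for c
    using in_word_word_point[OF n, of 0 c] by (simp add: word_point_def)
  ultimately show ?thesis using in_word_same_length_eq[OF n assms(2,3)] left by metis
qed

lemma tree_pair_leaf_image:
  assumes "tree_pair n (Tp, \<sigma>, Tm)" "w \<in> Tp"
  shows "\<sigma> w \<in> Tm" "set (\<sigma> w) \<subseteq> {..<n}"
  using assms ntree_digits by (auto simp: tree_pair_def bij_betw_def)

lemma tp_map_leaf:
  assumes "tree_pair n (Tp, \<sigma>, Tm)" "n > 0" "w \<in> Tp" "in_word n w x"
  shows "tp_map n (Tp, \<sigma>, Tm) x = interval_map n w (\<sigma> w) x"
proof -
  have "Tp \<in> ntree n" using assms(1) by (simp add: tree_pair_def)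
  then have "(THE w. w \<in> Tp \<and> in_word n w x) = w"
    using ntree_in_word_unique assms(2-4) by (intro the_equality) auto
  then show ?thesis
    using assms(2-4) wlen_pos[OF assms(2), of w]
    by (auto simp: tp_map_def interval_map_def word_point_def word_coord_def)
qed

lemma tp_map_outside:
  assumes "tree_pair n (Tp, \<sigma>, Tm)" "n > 0" "\<not> (0 \<le> x \<and> x < 1)"
  shows "tp_map n (Tp, \<sigma>, Tm) x = x"
proof -
  have "Tp \<in> ntree n" using assms(1) by (simp add: tree_pair_def)
  then have "\<not> (\<exists>w\<in>Tp. in_word n w x)"
    using in_word_unit_interval[OF assms(2) ntree_digits] assms(3) by blast
  then show ?thesis by (simp add: tp_map_def)
qed

lemma tp_map_cong:
  assumes "tree_pair n (Tp, \<sigma>, Tm)" "tree_pair n (Tp, \<sigma>', Tm')" "n > 0" "\<forall>w\<in>Tp. \<sigma> w = \<sigma>' w"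
  shows "tp_map n (Tp, \<sigma>, Tm) = tp_map n (Tp, \<sigma>', Tm')"
proof
  fix x
  show "tp_map n (Tp, \<sigma>, Tm) x = tp_map n (Tp, \<sigma>', Tm') x"
  proof (cases "0 \<le> x \<and> x < 1")
    case True
    moreover have "Tp \<in> ntree n" using assms(1) by (simp add: tree_pair_def)
    ultimately obtain w where "w \<in> Tp" "in_word n w x" using ntree_cover assms(3) by blast
    then show ?thesis using tp_map_leaf[OF assms(1,3)] tp_map_leaf[OF assms(2,3)] assms(4) by simp
  qed (simp add: tp_map_outside[OF assms(1,3)] tp_map_outside[OF assms(2,3)])
qed

lemma tp_map_identity:
  assumes "T \<in> ntree n" "n > 0"
  shows "tp_map n (T, id, T) = id"
proof
  fix x
  have tp: "tree_pair n (T, id, T)" using assms(1) by (simp add: tree_pair_def)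
  show "tp_map n (T, id, T) x = id x"
  proof (cases "0 \<le> x \<and> x < 1")
    case True
    then obtain w where "w \<in> T" "in_word n w x" using ntree_cover assms by blast
    then show ?thesis using tp_map_leaf[OF tp assms(2)] assms(2) by simp
  qed (simp add: tp_map_outside[OF tp assms(2)])
qed

lemma in_word_tp_map_iff:
  assumes "tree_pair n (Tp, \<sigma>, Tm)" "n > 0" "w \<in> Tp"
  shows "in_word n (\<sigma> w) (tp_map n (Tp, \<sigma>, Tm) x) \<longleftrightarrow> in_word n w x"
proof
  show "in_word n w x \<Longrightarrow> in_word n (\<sigma> w) (tp_map n (Tp, \<sigma>, Tm) x)"
    using tp_map_leaf[OF assms] in_word_interval_map[OF assms(2)] by simp
next
  assume image: "in_word n (\<sigma> w) (tp_map n (Tp, \<sigma>, Tm) x)"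
  have trees: "Tp \<in> ntree n" "Tm \<in> ntree n" and inj: "inj_on \<sigma> Tp"
    using assms(1) by (auto simp: tree_pair_def bij_betw_def)
  show "in_word n w x"
  proof (cases "0 \<le> x \<and> x < 1")
    case True
    then obtain a where a: "a \<in> Tp" "in_word n a x" using ntree_cover[OF trees(1) assms(2)] by blast
    then have "in_word n (\<sigma> a) (tp_map n (Tp, \<sigma>, Tm) x)"
      using tp_map_leaf[OF assms(1,2)] in_word_interval_map[OF assms(2)] by simp
    then have "\<sigma> a = \<sigma> w"
      using ntree_in_word_unique[OF trees(2) assms(2)] tree_pair_leaf_image[OF assms(1)] a(1) assms(3) image
      by blast
    then show ?thesis using inj a assms(3) by (auto dest: inj_onD)
  next
    case False
    then show ?thesis
      using image tp_map_outside[OF assms(1,2)] in_word_unit_interval[OF assms(2)]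
        tree_pair_leaf_image(2)[OF assms(1,3)] by auto
  qed
qed

section \<open>Grafting tree pairs\<close>

fun graft_pair :: "tpair \<Rightarrow> nat list \<Rightarrow> tpair \<Rightarrow> tpair" where
  "graft_pair (Tp, \<sigma>, Tm) u (Ap, \<rho>, Am) =
     (graft Tp u Ap,
      \<lambda>x. if x \<in> (\<lambda>w. u @ w) ` Ap then \<sigma> u @ \<rho> (drop (length u) x) else \<sigma> x,
      graft Tm (\<sigma> u) Am)"

lemma attach_eq_graft_pair: "attach T v H = graft_pair (T, id, T) v H"
  by (cases H) (simp add: attach_def graft_def fun_eq_iff)

lemma tree_pair_graft_pair:
  assumes P: "tree_pair n (Tp, \<sigma>, Tm)" and u: "u \<in> Tp" and A: "tree_pair n (Ap, \<rho>, Am)"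
  shows "tree_pair n (graft_pair (Tp, \<sigma>, Tm) u (Ap, \<rho>, Am))"
proof -
  have trees: "Tp \<in> ntree n" "Tm \<in> ntree n" "Ap \<in> ntree n" "Am \<in> ntree n"
    and bij: "bij_betw \<sigma> Tp Tm" "bij_betw \<rho> Ap Am"
    using P A by (auto simp: tree_pair_def)
  have v: "\<sigma> u \<in> Tm" using tree_pair_leaf_image(1)[OF P u] .
  let ?s = "\<lambda>x. if x \<in> (\<lambda>w. u @ w) ` Ap then \<sigma> u @ \<rho> (drop (length u) x) else \<sigma> x"
  have "\<sigma> ` (Tp - {u}) = Tm - {\<sigma> u}"
    using bij(1) u inj_on_image_set_diff[of \<sigma> Tp Tp "{u}"] by (simp add: bij_betw_def)
  then have "bij_betw \<sigma> (Tp - {u}) (Tm - {\<sigma> u})"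
    by (rule bij_betw_subset[OF bij(1) Diff_subset])
  moreover have "bij_betw ?s (Tp - {u}) (Tm - {\<sigma> u}) = bij_betw \<sigma> (Tp - {u}) (Tm - {\<sigma> u})"
    by (rule bij_betw_cong) (use graft_disjoint[OF trees(1) u, of Ap] in auto)
  ultimately have outside: "bij_betw ?s (Tp - {u}) (Tm - {\<sigma> u})" by simp
  have "bij_betw (\<lambda>x. \<sigma> u @ \<rho> (drop (length u) x)) ((\<lambda>w. u @ w) ` Ap) ((\<lambda>w. \<sigma> u @ w) ` Am)"
  proof -
    have strip: "bij_betw (drop (length u)) ((\<lambda>w. u @ w) ` Ap) Ap"
      by (auto simp: bij_betw_def inj_on_def image_image)
    have prepend: "bij_betw (\<lambda>w. \<sigma> u @ w) Am ((\<lambda>w. \<sigma> u @ w) ` Am)"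
      by (simp add: bij_betw_def inj_on_def)
    show ?thesis using bij_betw_trans[OF bij_betw_trans[OF strip bij(2)] prepend] by (simp add: comp_def)
  qed
  moreover have "bij_betw ?s ((\<lambda>w. u @ w) ` Ap) ((\<lambda>w. \<sigma> u @ w) ` Am)
      = bij_betw (\<lambda>x. \<sigma> u @ \<rho> (drop (length u) x)) ((\<lambda>w. u @ w) ` Ap) ((\<lambda>w. \<sigma> u @ w) ` Am)"
    by (rule bij_betw_cong) auto
  ultimately have inside: "bij_betw ?s ((\<lambda>w. u @ w) ` Ap) ((\<lambda>w. \<sigma> u @ w) ` Am)" by simp
  have "bij_betw ?s (graft Tp u Ap) (graft Tm (\<sigma> u) Am)"
    unfolding graft_def by (rule bij_betw_combine[OF outside inside graft_disjoint[OF trees(2) v]])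
  then show ?thesis
    using ntree_graft[OF trees(1) u trees(3)] ntree_graft[OF trees(2) v trees(4)]
    by (simp add: tree_pair_def)
qed

lemma tp_map_graft_pair:
  assumes P: "tree_pair n (Tp, \<sigma>, Tm)" and u: "u \<in> Tp" and A: "tree_pair n (Ap, \<rho>, Am)"
    and n: "n > 0"
  shows "tp_map n (graft_pair (Tp, \<sigma>, Tm) u (Ap, \<rho>, Am)) x =
    (if in_word n u x then word_point n (\<sigma> u) (tp_map n (Ap, \<rho>, Am) (word_coord n u x))
     else tp_map n (Tp, \<sigma>, Tm) x)"
proof -
  have trees: "Tp \<in> ntree n" "Ap \<in> ntree n" using P A by (simp_all add: tree_pair_def)
  let ?s = "\<lambda>x. if x \<in> (\<lambda>w. u @ w) ` Ap then \<sigma> u @ \<rho> (drop (length u) x) else \<sigma> x"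
  have G: "tree_pair n (graft Tp u Ap, ?s, graft Tm (\<sigma> u) Am)"
    using tree_pair_graft_pair[OF P u A] by simp
  consider (inside) "in_word n u x" | (leaf) "\<not> in_word n u x" "0 \<le> x \<and> x < 1"
    | (outside) "\<not> (0 \<le> x \<and> x < 1)"
    by blast
  then show ?thesis
  proof cases
    case inside
    then obtain w where w: "w \<in> Ap" "in_word n w (word_coord n u x)"
      using ntree_cover[OF trees(2) n] inside in_word_iff_word_coord[OF n] by meson
    then have "in_word n (u @ w) x" and "u @ w \<in> graft Tp u Ap"
      by (simp_all add: in_word_append[OF n] graft_def)
    then have "tp_map n (graft_pair (Tp, \<sigma>, Tm) u (Ap, \<rho>, Am)) x = interval_map n (u @ w) (\<sigma> u @ \<rho> w) x"
      using tp_map_leaf[OF G n] w(1) by simp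
    also have "\<dots> = word_point n (\<sigma> u) (tp_map n (Ap, \<rho>, Am) (word_coord n u x))"
      using interval_map_append[OF n] tp_map_leaf[OF A n w] by simp
    finally show ?thesis using inside by simp
  next
    case leaf
    then obtain a where a: "a \<in> graft Tp u Ap" "in_word n a x"
      using ntree_cover[OF ntree_graft[OF trees(1) u trees(2)] n] by blast
    have "a \<notin> (\<lambda>w. u @ w) ` Ap"
      using in_word_appendD[OF n ntree_digits[OF trees(2)]] a(2) leaf(1) by blast
    then have "a \<in> Tp" using a(1) by (simp add: graft_def)
    then show ?thesis
      using tp_map_leaf[OF G n a] tp_map_leaf[OF P n _ a(2)] leaf(1) \<open>a \<notin> (\<lambda>w. u @ w) ` Ap\<close> by simp
  next
    case outside
    then show ?thesis
      using tp_map_outside[OF G n] tp_map_outside[OF P n] in_word_unit_interval[OF n ntree_digits[OF trees(1) u]]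
      by auto
  qed
qed

lemma tp_map_graft_pair_comp:
  assumes G: "tree_pair n (Gp, \<sigma>, Gm)" and u: "u \<in> Gp" and A: "tree_pair n (Ap, \<rho>, Am)"
    and T: "T \<in> ntree n" "\<sigma> u \<in> T" and n: "n > 0"
  shows "tp_map n (graft_pair (Gp, \<sigma>, Gm) u (Ap, \<rho>, Am))
       = tp_map n (graft_pair (T, id, T) (\<sigma> u) (Ap, \<rho>, Am)) \<circ> tp_map n (Gp, \<sigma>, Gm)"
proof
  fix x
  have I: "tree_pair n (T, id, T)" using T(1) by (simp add: tree_pair_def)
  have "tp_map n (graft_pair (T, id, T) (\<sigma> u) (Ap, \<rho>, Am)) y =
      (if in_word n (\<sigma> u) y then word_point n (\<sigma> u) (tp_map n (Ap, \<rho>, Am) (word_coord n (\<sigma> u) y))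
       else y)" for y
    using tp_map_graft_pair[OF I T(2) A n] tp_map_identity[OF T(1) n] by simp
  moreover have "word_coord n (\<sigma> u) (tp_map n (Gp, \<sigma>, Gm) x) = word_coord n u x" if "in_word n u x"
    using tp_map_leaf[OF G n u that] n by simp
  ultimately show "tp_map n (graft_pair (Gp, \<sigma>, Gm) u (Ap, \<rho>, Am)) x
      = (tp_map n (graft_pair (T, id, T) (\<sigma> u) (Ap, \<rho>, Am)) \<circ> tp_map n (Gp, \<sigma>, Gm)) x"
    using tp_map_graft_pair[OF G u A n] in_word_tp_map_iff[OF G n u] by simp
qed

section \<open>Reduced tree pairs\<close>

lemma tree_pair_caret_image:
  assumes P: "tree_pair n (Tp, \<sigma>, Tm)" and c: "\<forall>i<n. w @ [i] \<in> Tp \<and> \<sigma> (w @ [i]) = w' @ [i]"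
  shows "caret n w \<subseteq> Tp" "\<sigma> ` caret n w = caret n w'" "caret n w' \<subseteq> Tm"
proof -
  show sub: "caret n w \<subseteq> Tp" and img: "\<sigma> ` caret n w = caret n w'"
    using c by (force simp: caret_def)+
  have "\<sigma> ` Tp = Tm" using P by (simp add: tree_pair_def bij_betw_def)
  then show "caret n w' \<subseteq> Tm" using sub img by blast
qed

lemma tree_pair_contract:
  assumes P: "tree_pair n (Tp, \<sigma>, Tm)" and n: "n > 0"
    and c: "\<forall>i<n. w @ [i] \<in> Tp \<and> \<sigma> (w @ [i]) = w' @ [i]"
  shows "tree_pair n (Tp - caret n w \<union> {w}, \<sigma>(w := w'), Tm - caret n w' \<union> {w'})"
proof -
  have trees: "Tp \<in> ntree n" "Tm \<in> ntree n" and bij: "bij_betw \<sigma> Tp Tm"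
    using P by (auto simp: tree_pair_def)
  note carets = tree_pair_caret_image[OF P c]
  have notin: "w \<notin> Tp" "w' \<notin> Tm"
    using ntree_caret_parent_notin[OF trees(1) n carets(1)] ntree_caret_parent_notin[OF trees(2) n carets(3)]
    by simp_all
  have "\<sigma> ` (Tp - caret n w) = Tm - caret n w'"
    using inj_on_image_set_diff[of \<sigma> Tp Tp "caret n w"] bij carets by (simp add: bij_betw_def)
  then have "bij_betw \<sigma> (Tp - caret n w) (Tm - caret n w')"
    by (rule bij_betw_subset[OF bij Diff_subset])
  moreover have "bij_betw (\<sigma>(w := w')) (Tp - caret n w) (Tm - caret n w')
      = bij_betw \<sigma> (Tp - caret n w) (Tm - caret n w')"
    by (rule bij_betw_cong) (use notin in auto)
  ultimately have "bij_betw (\<sigma>(w := w')) (Tp - caret n w \<union> {w}) (Tm - caret n w' \<union> {w'})"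
    using notIn_Un_bij_betw[of w "Tp - caret n w" "\<sigma>(w := w')" "Tm - caret n w'"] notin by simp
  then show ?thesis
    using ntree_contract[OF trees(1) n carets(1)] ntree_contract[OF trees(2) n carets(3)]
    by (simp add: tree_pair_def)
qed

lemma tp_map_contract:
  assumes P: "tree_pair n (Tp, \<sigma>, Tm)" and n: "n > 0"
    and c: "\<forall>i<n. w @ [i] \<in> Tp \<and> \<sigma> (w @ [i]) = w' @ [i]"
  shows "tp_map n (Tp - caret n w \<union> {w}, \<sigma>(w := w'), Tm - caret n w' \<union> {w'}) = tp_map n (Tp, \<sigma>, Tm)"
    (is "tp_map n ?P' = _")
proof -
  \<comment> \<open>Grafting the trivial caret pair back onto the leaf w of the contracted pair restores the original pair.\<close>
  have P': "tree_pair n ?P'" using tree_pair_contract[OF P n c] .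
  let ?C = "(caret n [], id, caret n [])"
  have C: "tree_pair n ?C"
    using ntree_expand_caret[OF ntree.root, of "[]" n] by (simp add: tree_pair_def)
  note carets = tree_pair_caret_image[OF P c]
  have trees: "Tp \<in> ntree n" "Tm \<in> ntree n" using P by (simp_all add: tree_pair_def)
  have notin: "w \<notin> Tp" "w' \<notin> Tm"
    using ntree_caret_parent_notin[OF trees(1) n carets(1)] ntree_caret_parent_notin[OF trees(2) n carets(3)]
    by simp_all
  have "(\<lambda>v. u @ v) ` caret n [] = caret n u" for u by (auto simp: caret_def)
  then have "graft (Tp - caret n w \<union> {w}) w (caret n []) = Tp"
    "graft (Tm - caret n w' \<union> {w'}) w' (caret n []) = Tm"
    using carets notin by (auto simp: graft_def caret_def)
  then obtain s where graft: "graft_pair ?P' w ?C = (Tp, s, Tm)" by simp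
  have s: "\<forall>x\<in>Tp. s x = \<sigma> x"
    using graft c notin(1) by (auto simp: caret_def)
  have "tree_pair n (Tp, s, Tm)" using tree_pair_graft_pair[OF P' _ C, of w] graft by simp
  then have "tp_map n (Tp, \<sigma>, Tm) = tp_map n (graft_pair ?P' w ?C)"
    using tp_map_cong[OF P _ n] graft s by simp
  also have "\<dots> = tp_map n ?P'"
  proof
    fix x
    have "tp_map n ?C = id" using C by (simp add: tree_pair_def tp_map_identity[OF _ n])
    then show "tp_map n (graft_pair ?P' w ?C) x = tp_map n ?P' x"
      using tp_map_graft_pair[OF P' _ C n, of w x] tp_map_leaf[OF P' n, of w x]
      by (simp add: interval_map_def)
  qed
  finally show ?thesis ..
qed

lemma reduced_representative_exists:
  assumes "tree_pair n (Tp, \<sigma>, Tm)" "n \<ge> 2"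
  shows "\<exists>Ap \<rho> Am. tree_pair n (Ap, \<rho>, Am) \<and> reduced n (Ap, \<rho>, Am)
           \<and> tp_map n (Ap, \<rho>, Am) = tp_map n (Tp, \<sigma>, Tm)"
  using assms(1)
proof (induction "card Tp" arbitrary: Tp \<sigma> Tm rule: less_induct)
  case less
  show ?case
  proof (cases "reduced n (Tp, \<sigma>, Tm)")
    case False
    then obtain w w' where c: "\<forall>i<n. w @ [i] \<in> Tp \<and> \<sigma> (w @ [i]) = w' @ [i]"
      unfolding reduced_def by blast
    have "card (Tp - caret n w \<union> {w}) < card Tp"
      using card_ntree_contract less.prems assms(2) c by (auto simp: tree_pair_def caret_def)
    then show ?thesis
      using less.hyps tree_pair_contract[OF less.prems _ c] tp_map_contract[OF less.prems _ c] assms(2)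
      by fastforce
  qed (use less.prems in blast)
qed

definition affine_on_word :: "nat \<Rightarrow> (real \<Rightarrow> real) \<Rightarrow> nat list \<Rightarrow> bool" where
  "affine_on_word n f p \<longleftrightarrow>
     (\<exists>q. set q \<subseteq> {..<n} \<and> (\<forall>x. in_word n p x \<longrightarrow> f x = interval_map n p q x))"

definition maximal_affine_words :: "nat \<Rightarrow> (real \<Rightarrow> real) \<Rightarrow> nat list set" where
  "maximal_affine_words n f = {p. set p \<subseteq> {..<n} \<and> affine_on_word n f p
     \<and> (\<forall>p'. strict_prefix p' p \<longrightarrow> \<not> affine_on_word n f p')}"

lemma affine_on_leaf:
  assumes "tree_pair n (Tp, \<sigma>, Tm)" "n > 0" "w \<in> Tp"
  shows "affine_on_word n (tp_map n (Tp, \<sigma>, Tm)) w"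
  unfolding affine_on_word_def using tree_pair_leaf_image(2)[OF assms(1,3)] tp_map_leaf[OF assms] by blast

lemma leaf_image_if_affine:
  assumes P: "tree_pair n (Tp, \<sigma>, Tm)" and n: "n \<ge> 2" and leaf: "p @ d \<in> Tp"
    and q: "set q \<subseteq> {..<n}" and affine: "\<forall>x. in_word n p x \<longrightarrow> tp_map n (Tp, \<sigma>, Tm) x = interval_map n p q x"
  shows "\<sigma> (p @ d) = q @ d"
proof (rule interval_map_inject[OF n tree_pair_leaf_image(2)[OF P leaf]])
  have n0: "n > 0" and d: "set d \<subseteq> {..<n}"
    using n ntree_digits[of Tp n "p @ d"] leaf P by (auto simp: tree_pair_def)
  show "set (q @ d) \<subseteq> {..<n}" using q d by simp
  show "\<forall>x. in_word n (p @ d) x \<longrightarrow> interval_map n (p @ d) (\<sigma> (p @ d)) x = interval_map n (p @ d) (q @ d) x"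
    using tp_map_leaf[OF P n0 leaf] affine in_word_appendD[OF n0 d] n0
    by (simp add: interval_map_append) (simp add: interval_map_def)
qed

lemma not_affine_above_leaf:
  assumes P: "tree_pair n (Tp, \<sigma>, Tm)" "reduced n (Tp, \<sigma>, Tm)" and n: "n \<ge> 2"
    and "b \<in> Tp" "strict_prefix p b"
  shows "\<not> affine_on_word n (tp_map n (Tp, \<sigma>, Tm)) p"
proof
  assume "affine_on_word n (tp_map n (Tp, \<sigma>, Tm)) p"
  then obtain q where q: "set q \<subseteq> {..<n}" "\<forall>x. in_word n p x \<longrightarrow> tp_map n (Tp, \<sigma>, Tm) x = interval_map n p q x"
    unfolding affine_on_word_def by blast
  have "Tp \<in> ntree n" using P(1) by (simp add: tree_pair_def)
  then obtain c where "caret n (p @ c) \<subseteq> Tp" using ntree_caret_below assms(4,5) by blast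
  then have "\<forall>i<n. (p @ c) @ [i] \<in> Tp \<and> \<sigma> ((p @ c) @ [i]) = (q @ c) @ [i]"
    using leaf_image_if_affine[OF P(1) n _ q] by (auto simp: caret_def)
  then show False using P(2) unfolding reduced_def by blast
qed

lemma leaves_eq_maximal_affine_words:
  assumes P: "tree_pair n (Tp, \<sigma>, Tm)" "reduced n (Tp, \<sigma>, Tm)" and n: "n \<ge> 2"
  shows "Tp = maximal_affine_words n (tp_map n (Tp, \<sigma>, Tm))"
proof
  have n0: "n > 0" and T: "Tp \<in> ntree n" using n P(1) by (auto simp: tree_pair_def)
  show "Tp \<subseteq> maximal_affine_words n (tp_map n (Tp, \<sigma>, Tm))"
    using ntree_digits[OF T] affine_on_leaf[OF P(1) n0] not_affine_above_leaf[OF P n]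
    unfolding maximal_affine_words_def by blast
  show "maximal_affine_words n (tp_map n (Tp, \<sigma>, Tm)) \<subseteq> Tp"
  proof
    fix p assume p: "p \<in> maximal_affine_words n (tp_map n (Tp, \<sigma>, Tm))"
    then have "set p \<subseteq> {..<n}" by (simp add: maximal_affine_words_def)
    then obtain b where b: "b \<in> Tp" "prefix b p \<or> prefix p b"
      using ntree_prefix_comparable[OF T n0] by blast
    then consider "b = p" | "strict_prefix b p" | "strict_prefix p b"
      by (auto simp: strict_prefix_def)
    then show "p \<in> Tp"
      using b(1) p affine_on_leaf[OF P(1) n0 b(1)] not_affine_above_leaf[OF P n b(1)]
      unfolding maximal_affine_words_def by cases auto
  qed
qed

lemma nleaves_eq_card:
  assumes "represents n P f" "reduced n P" "n \<ge> 2"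
  shows "nleaves n f = card (fst P)"
proof -
  have leaves: "fst Q = maximal_affine_words n f" if "represents n Q f" "reduced n Q" for Q
    using leaves_eq_maximal_affine_words[of n "fst Q" "fst (snd Q)" "snd (snd Q)"] that assms(3)
    by (simp add: represents_def)
  show ?thesis
    unfolding nleaves_def
  proof (rule the_equality)
    fix k assume "\<exists>Q. represents n Q f \<and> reduced n Q \<and> card (fst Q) = k"
    then show "k = card (fst P)" using leaves assms(1,2) by auto
  qed (use assms(1,2) in blast)
qed

lemma reduced_prepend_target:
  assumes A: "tree_pair n (Ap, \<rho>, Am)" "reduced n (Ap, \<rho>, Am)" and n: "n \<ge> 2"
  shows "\<not> (\<forall>i<n. d @ [i] \<in> Ap \<and> v @ \<rho> (d @ [i]) = w' @ [i])"
proof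
  assume caret: "\<forall>i<n. d @ [i] \<in> Ap \<and> v @ \<rho> (d @ [i]) = w' @ [i]"
  show False
  proof (cases "length v \<le> length w'")
    case True
    then have "\<rho> (d @ [i]) = drop (length v) w' @ [i]" if "i < n" for i
      using arg_cong[of _ _ "drop (length v)", OF conjunct2[OF caret[rule_format, OF that]]] by simp
    then show False using A(2) caret unfolding reduced_def by blast
  next
    case False
    then have "\<rho> (d @ [i]) = []" if "i < n" for i
      using arg_cong[of _ _ length, OF conjunct2[OF caret[rule_format, OF that]]]
      by (cases "\<rho> (d @ [i])") auto
    moreover have "inj_on \<rho> Ap" using A(1) by (simp add: tree_pair_def bij_betw_def)
    ultimately show False using caret n by (auto dest: inj_onD[of _ _ "d @ [0]" "d @ [1]"])
  qed
qed

lemma tree_pair_Nil_leaf: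
  assumes "tree_pair n (Ap, \<rho>, Am)" "n \<ge> 2" "[] \<in> Ap"
  shows "\<rho> [] = []"
proof -
  have "Ap = {[]}" using ntree_Nil assms(1,3) by (auto simp: tree_pair_def)
  then have "Am = {\<rho> []}" using assms(1) by (auto simp: tree_pair_def bij_betw_def)
  then show ?thesis using ntree_singleton assms(1,2) by (auto simp: tree_pair_def)
qed

lemma reduced_graft_pair:
  assumes n: "n \<ge> 2" and G: "tree_pair n (Gp, \<sigma>, Gm)" "reduced n (Gp, \<sigma>, Gm)" and u: "u \<in> Gp"
    and A: "tree_pair n (Ap, \<rho>, Am)" "reduced n (Ap, \<rho>, Am)"
  shows "reduced n (graft_pair (Gp, \<sigma>, Gm) u (Ap, \<rho>, Am))"
proof -
  have tree: "Gp \<in> ntree n" using G(1) by (simp add: tree_pair_def)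
  let ?s = "\<lambda>x. if x \<in> (\<lambda>w. u @ w) ` Ap then \<sigma> u @ \<rho> (drop (length u) x) else \<sigma> x"
  have False if caret: "\<forall>i<n. w @ [i] \<in> graft Gp u Ap \<and> ?s (w @ [i]) = w' @ [i]" for w w'
  proof (cases "prefix u w")
    case True
    then obtain d where d: "w = u @ d" by (auto simp: prefix_def)
    have "d @ [i] \<in> Ap \<and> \<sigma> u @ \<rho> (d @ [i]) = w' @ [i]" if "i < n" for i
    proof -
      have "u @ d @ [i] \<notin> Gp - {u}" using ntree_prefix_free[OF tree u, of "u @ d @ [i]"] by auto
      then show ?thesis using caret that d by (auto simp: graft_def)
    qed
    then show False using reduced_prepend_target[OF A n] by blast
  next
    case False
    \<comment> \<open>Such a caret can meet the copy of A+ only if A+ is the one-leaf tree, on which \<rho> is trivial.\<close>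
    have "w @ [i] \<in> Gp \<and> \<sigma> (w @ [i]) = w' @ [i]" if "i < n" for i
    proof (cases "w @ [i] \<in> (\<lambda>v. u @ v) ` Ap")
      case True
      then obtain e where e: "e \<in> Ap" "w @ [i] = u @ e" by auto
      have "e = []"
      proof (rule ccontr)
        assume "e \<noteq> []"
        then obtain e0 j where "e = e0 @ [j]" by (metis rev_exhaust)
        then show False using e(2) \<open>\<not> prefix u w\<close> by simp
      qed
      then show ?thesis using e tree_pair_Nil_leaf[OF A(1) n] caret that u by auto
    next
      case False
      then show ?thesis using caret that by (auto simp: graft_def)
    qed
    then show False using G(2) unfolding reduced_def by blast
  qed
  then show ?thesis unfolding reduced_def graft_pair.simps by blast
qed

theorem lemma3p8:
  fixes n :: nat and G :: "(real \<Rightarrow> real) set" and g h :: "real \<Rightarrow> real"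
    and Gp Gm T Hp Hm :: "nat list set" and \<sigma> \<tau> :: "nat list \<Rightarrow> nat list" and u v :: "nat list"
  assumes "n \<ge> 2"
    and "G \<in> {Fn n, Tn n, Vn n}"
    and "g \<in> G"
    and "represents n (Gp, \<sigma>, Gm) g" and "reduced n (Gp, \<sigma>, Gm)"
    and "u \<in> Gp" and "v = \<sigma> u"
    and "h \<in> Fn n"
    and "F_pair n (Hp, \<tau>, Hm)" and "tp_map n (Hp, \<tau>, Hm) = h"
    and "T \<in> ntree n" and "v \<in> T"
  shows "nleaves n (tp_map n (attach T v (Hp, \<tau>, Hm)) \<circ> g) = nleaves n g + nleaves n h - 1"
proof -
  have n: "n > 0" using assms(1) by simp
  have G: "tree_pair n (Gp, \<sigma>, Gm)" and g: "tp_map n (Gp, \<sigma>, Gm) = g"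
    using assms(4) by (auto simp: represents_def)
  have H: "tree_pair n (Hp, \<tau>, Hm)" using assms(9) by (simp add: F_pair_def)
  obtain Ap \<rho> Am where A: "tree_pair n (Ap, \<rho>, Am)" and A_reduced: "reduced n (Ap, \<rho>, Am)"
    and h: "tp_map n (Ap, \<rho>, Am) = h"
    using reduced_representative_exists[OF H assms(1)] assms(10) by blast
  have I: "tree_pair n (T, id, T)" using assms(11) by (simp add: tree_pair_def)
  have "tp_map n (attach T v (Hp, \<tau>, Hm)) = tp_map n (graft_pair (T, id, T) v (Ap, \<rho>, Am))"
    using tp_map_graft_pair[OF I assms(12) H n] tp_map_graft_pair[OF I assms(12) A n] h assms(10)
    by (simp add: attach_eq_graft_pair fun_eq_iff)
  then have "tp_map n (attach T v (Hp, \<tau>, Hm)) \<circ> g = tp_map n (graft_pair (Gp, \<sigma>, Gm) u (Ap, \<rho>, Am))"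
    using tp_map_graft_pair_comp[OF G assms(6) A assms(11) _ n] assms(7,12) g by simp
  then have "nleaves n (tp_map n (attach T v (Hp, \<tau>, Hm)) \<circ> g) = card (graft Gp u Ap)"
    using nleaves_eq_card[OF _ reduced_graft_pair[OF assms(1) G assms(5,6) A A_reduced] assms(1)]
      tree_pair_graft_pair[OF G assms(6) A] by (simp add: represents_def)
  moreover have "nleaves n g = card Gp" "nleaves n h = card Ap"
    using nleaves_eq_card[OF assms(4,5,1)] nleaves_eq_card[OF _ A_reduced assms(1)] A h
    by (simp_all add: represents_def)
  moreover have "Gp \<in> ntree n" "Ap \<in> ntree n" using G A by (simp_all add: tree_pair_def)
  then have "card (graft Gp u Ap) = card Gp + card Ap - 1" by (rule card_graft[OF _ assms(6)])
  ultimately show ?thesis by simp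
qed

end
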